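(* Let $n\ge 2$ and let $\Omega$ be a compact subset of $\mathbb{R}^n$. Then $\mathit{Uf}(\mathrm{conv}(\Omega))\subset \mathit{Uf}(\Omega)$, i.e. the minimal unfolded region of the convex hull of $\Omega$ is included in the minimal unfolded region of $\Omega$.
   Context: $\mathrm{conv}(\Omega)$ is the convex hull of $\Omega$; $S^{n-1}$ is the unit sphere in $\mathbb{R}^n$. For $X\subset\mathbb{R}^n$, $v\in S^{n-1}$ and $b\in\mathbb{R}$, put $X^+_{v,b}=X\cap\{x\in\mathbb{R}^n : x\cdot v>b\}$, and let $\mathrm{R}_{v,b}$ be the reflection of $\mathbb{R}^n$ in the hyperplane $\{x : x\cdot v=b\}$. For a bounded $X\subset\mathbb{R}^n$, define $l_X(v)=\inf\{a : \mathrm{R}_{v,c}(X^+_{v,c})\subset X \text{ for every } c\ge a\}$ and the minimal unfolded region $\mathit{Uf}(X)=\bigcap_{v\in S^{n-1}}\{x\in\mathbb{R}^n : x\cdot v\le l_X(v)\}$. *)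

theory Defs
  imports "HOL-Analysis.Analysis"
begin

definition upper_part :: "'a::euclidean_space set \<Rightarrow> 'a \<Rightarrow> real \<Rightarrow> 'a set" where
  "upper_part X v b = X \<inter> {x. x \<bullet> v > b}"

text \<open>Reflection in the hyperplane {x. x \<bullet> v = b}, for a unit vector v.\<close>
definition refl_hyp :: "'a::euclidean_space \<Rightarrow> real \<Rightarrow> 'a \<Rightarrow> 'a" where
  "refl_hyp v b x = x - (2 * (x \<bullet> v - b)) *\<^sub>R v"

definition l_fun :: "'a::euclidean_space set \<Rightarrow> 'a \<Rightarrow> real" where
  "l_fun X v = Inf {a. \<forall>c\<ge>a. refl_hyp v c ` upper_part X v c \<subseteq> X}"

definition Uf :: "'a::euclidean_space set \<Rightarrow> 'a set" where
  "Uf X = (\<Inter>v\<in>sphere 0 1. {x. x \<bullet> v \<le> l_fun X v})"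

end

theory Submission
  imports Defs
begin

text \<open>If the reflection in the hyperplane x \<bullet> v = c maps the part of \<Omega> above it into \<Omega>, the
  same holds for the convex hull K of \<Omega>. Indeed, with the folding depth
  d y = 2 max 0 (y \<bullet> v - c), the reflection of y above the hyperplane is y - d y v, and the set
  {y \<in> K. y - d y v \<in> K} is convex because d is a convex nonnegative function; it contains \<Omega>,
  hence all of K. So every level admissible for \<Omega> is admissible for K, which gives
  l_K \<le> l_\<Omega> and thus Uf K \<subseteq> Uf \<Omega>.\<close>

definition reflection_stable :: "'a::euclidean_space set \<Rightarrow> 'a \<Rightarrow> real \<Rightarrow> bool" where
  "reflection_stable X v c \<longleftrightarrow> refl_hyp v c ` upper_part X v c \<subseteq> X"

lemma l_fun_eq_Inf_reflection_stable:
  "l_fun X v = Inf {a. \<forall>c\<ge>a. reflection_stable X v c}"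
  by (simp add: l_fun_def reflection_stable_def)

lemma inner_refl_hyp:
  assumes "norm v = 1"
  shows "refl_hyp v c x \<bullet> v = 2 * c - x \<bullet> v"
  using assms by (simp add: refl_hyp_def inner_diff_left dot_square_norm algebra_simps)

lemma convex_shift_between:
  fixes K :: "'a::real_vector set"
  assumes K: "convex K" and y: "y \<in> K" "y - T *\<^sub>R v \<in> K" and t: "0 \<le> t" "t \<le> T"
  shows "y - t *\<^sub>R v \<in> K"
proof (cases "T = 0")
  case True
  with t y show ?thesis by simp
next
  case False
  with t have T: "T > 0" by simp
  have "(1 - t / T) *\<^sub>R y + (t / T) *\<^sub>R (y - T *\<^sub>R v) \<in> K"
    using t T by (intro convexD_alt[OF K y]) auto
  also have "(1 - t / T) *\<^sub>R y + (t / T) *\<^sub>R (y - T *\<^sub>R v) = y - t *\<^sub>R v"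
    using T by (simp add: algebra_simps)
  finally show ?thesis .
qed

lemma convex_shift_set:
  fixes K :: "'a::real_vector set"
  assumes K: "convex K" and f: "convex_on UNIV f" and f_nonneg: "\<And>y. 0 \<le> f y"
  shows "convex {y \<in> K. y - f y *\<^sub>R v \<in> K}"
proof (rule convexI)
  fix y1 y2 and u w :: real
  assume y1: "y1 \<in> {y \<in> K. y - f y *\<^sub>R v \<in> K}" and y2: "y2 \<in> {y \<in> K. y - f y *\<^sub>R v \<in> K}"
    and uw: "0 \<le> u" "0 \<le> w" "u + w = 1"
  let ?y = "u *\<^sub>R y1 + w *\<^sub>R y2"
  have "?y \<in> K"
    using y1 y2 uw by (intro convexD[OF K]) auto
  moreover have "?y - (u * f y1 + w * f y2) *\<^sub>R v \<in> K"
  proof -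
    have "u *\<^sub>R (y1 - f y1 *\<^sub>R v) + w *\<^sub>R (y2 - f y2 *\<^sub>R v) \<in> K"
      using y1 y2 uw by (intro convexD[OF K]) auto
    then show ?thesis
      by (simp add: algebra_simps)
  qed
  moreover have "f ?y \<le> u * f y1 + w * f y2"
    using f uw by (simp add: convex_on_def)
  ultimately show "?y \<in> {y \<in> K. y - f y *\<^sub>R v \<in> K}"
    using convex_shift_between[OF K] f_nonneg by blast
qed

lemma convex_on_fold_depth: "convex_on UNIV (\<lambda>y. 2 * max 0 (y \<bullet> v - c))"
  unfolding convex_on_def
proof (intro conjI convex_UNIV ballI allI impI)
  fix x y :: 'a and u w :: real
  assume uw: "0 \<le> u" "0 \<le> w" "u + w = 1"
  have "(u *\<^sub>R x + w *\<^sub>R y) \<bullet> v - c = u * (x \<bullet> v - c) + w * (y \<bullet> v - c)"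
    using uw by (simp add: inner_add_left algebra_simps flip: distrib_left)
  moreover have "u * (x \<bullet> v - c) \<le> u * max 0 (x \<bullet> v - c)" "w * (y \<bullet> v - c) \<le> w * max 0 (y \<bullet> v - c)"
    using uw by (simp_all add: mult_left_mono)
  moreover have "0 \<le> u * max 0 (x \<bullet> v - c) + w * max 0 (y \<bullet> v - c)"
    using uw by simp
  ultimately have "max 0 ((u *\<^sub>R x + w *\<^sub>R y) \<bullet> v - c) \<le> u * max 0 (x \<bullet> v - c) + w * max 0 (y \<bullet> v - c)"
    by (intro max.boundedI) linarith+
  then show "2 * max 0 ((u *\<^sub>R x + w *\<^sub>R y) \<bullet> v - c)
      \<le> u * (2 * max 0 (x \<bullet> v - c)) + w * (2 * max 0 (y \<bullet> v - c))"
    by (simp add: algebra_simps del: max.bounded_iff)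
qed

lemma reflection_stable_convex_hull:
  assumes stable: "reflection_stable \<Omega> v c"
  shows "reflection_stable (convex hull \<Omega>) v c"
proof -
  define depth where "depth y = 2 * max 0 (y \<bullet> v - c)" for y
  have fold: "y - depth y *\<^sub>R v = refl_hyp v c y" if "y \<bullet> v > c" for y
    using that by (simp add: depth_def refl_hyp_def)
  let ?A = "{y \<in> convex hull \<Omega>. y - depth y *\<^sub>R v \<in> convex hull \<Omega>}"
  have "\<Omega> \<subseteq> ?A"
  proof
    fix p assume p: "p \<in> \<Omega>"
    show "p \<in> ?A"
    proof (cases "p \<bullet> v > c")
      case True
      then have "p - depth p *\<^sub>R v \<in> \<Omega>"
        using stable p by (auto simp: fold reflection_stable_def upper_part_def)
      with p show ?thesis by (simp add: hull_inc)
    next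
      case False
      with p show ?thesis by (simp add: depth_def hull_inc)
    qed
  qed
  moreover have "convex ?A"
    using convex_on_fold_depth unfolding depth_def
    by (intro convex_shift_set convex_convex_hull) auto
  ultimately have "convex hull \<Omega> \<subseteq> ?A"
    by (rule hull_minimal)
  then show ?thesis
    unfolding reflection_stable_def upper_part_def using fold by auto
qed

lemma reflection_stable_above_bound:
  assumes X: "\<And>x. x \<in> X \<Longrightarrow> norm x \<le> B" and v: "norm v = 1" and "B \<le> c"
  shows "reflection_stable X v c"
proof -
  have "x \<bullet> v \<le> c" if "x \<in> X" for x
    using Cauchy_Schwarz_ineq2[of x v] X[OF that] v \<open>B \<le> c\<close> by simp
  then have "upper_part X v c = {}"
    by (auto simp: upper_part_def not_less[symmetric])
  then show ?thesis
    by (simp add: reflection_stable_def)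
qed

lemma not_reflection_stable_below_bound:
  assumes X: "\<And>x. x \<in> X \<Longrightarrow> norm x \<le> B" and x: "x \<in> X" and v: "norm v = 1" and "c < - B"
  shows "\<not> reflection_stable X v c"
proof
  have inner_bound: "\<bar>y \<bullet> v\<bar> \<le> B" if "y \<in> X" for y
    using Cauchy_Schwarz_ineq2[of y v] X[OF that] v by simp
  assume "reflection_stable X v c"
  moreover have "x \<in> upper_part X v c"
    using inner_bound[OF x] x \<open>c < - B\<close> by (simp add: upper_part_def)
  ultimately have "refl_hyp v c x \<in> X"
    by (auto simp: reflection_stable_def)
  then have "\<bar>2 * c - x \<bullet> v\<bar> \<le> B"
    using inner_bound[of "refl_hyp v c x"] by (simp add: inner_refl_hyp[OF v])
  with inner_bound[OF x] \<open>c < - B\<close> show False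
    by linarith
qed

lemma l_fun_convex_hull_le:
  fixes \<Omega> :: "'a::euclidean_space set"
  assumes "bounded \<Omega>" and "\<Omega> \<noteq> {}" and v: "norm v = 1"
  shows "l_fun (convex hull \<Omega>) v \<le> l_fun \<Omega> v"
proof -
  obtain B where B: "\<And>x. x \<in> convex hull \<Omega> \<Longrightarrow> norm x \<le> B"
    using bounded_convex_hull[OF \<open>bounded \<Omega>\<close>] by (auto simp: bounded_iff)
  obtain x where x: "x \<in> convex hull \<Omega>"
    using \<open>\<Omega> \<noteq> {}\<close> hull_inc by fastforce
  have B_\<Omega>: "\<And>x. x \<in> \<Omega> \<Longrightarrow> norm x \<le> B"
    by (simp add: B hull_inc)
  have "B \<in> {a. \<forall>c\<ge>a. reflection_stable \<Omega> v c}"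
    using reflection_stable_above_bound[OF B_\<Omega> v] by simp
  moreover have "bdd_below {a. \<forall>c\<ge>a. reflection_stable (convex hull \<Omega>) v c}"
  proof (rule bdd_belowI)
    fix a assume "a \<in> {a. \<forall>c\<ge>a. reflection_stable (convex hull \<Omega>) v c}"
    then show "- B \<le> a"
      using not_reflection_stable_below_bound[OF B x v, of a] by force
  qed
  ultimately show ?thesis
    unfolding l_fun_eq_Inf_reflection_stable
    by (intro cInf_superset_mono) (auto intro: reflection_stable_convex_hull)
qed

lemma Uf_mono_l_fun:
  assumes "\<And>v. norm v = 1 \<Longrightarrow> l_fun X v \<le> l_fun Y v"
  shows "Uf X \<subseteq> Uf Y"
  unfolding Uf_def using assms by (auto intro: order_trans)

theorem theorem2p4:
  fixes \<Omega> :: "'a::euclidean_space set"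
  assumes "DIM('a) \<ge> 2"
    and "compact \<Omega>"
  shows "Uf (convex hull \<Omega>) \<subseteq> Uf \<Omega>"
proof (cases "\<Omega> = {}")
  case True
  then show ?thesis by simp
next
  case False
  then show ?thesis
    using compact_imp_bounded[OF \<open>compact \<Omega>\<close>]
    by (intro Uf_mono_l_fun l_fun_convex_hull_le)
qed

end
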